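(* Consider an $M/M/1$ queue with arrival rate $\lambda>0$ and service rate $\mu>0$ with current queue length $x_k\ge1$. Let $\tau^A\sim\mathrm{Exp}(\lambda)$ and $w\sim\mathrm{Exp}(1)$ be independent, and for $\beta>0$ define the single-sample PATHWISE estimator $$G_\beta:=\frac{\partial}{\partial\mu}\,\frac{e^{-\beta\tau^A}-e^{-\beta w/\mu}}{e^{-\beta\tau^A}+e^{-\beta w/\mu}}$$ of the target $\nabla_\mu\mathbb E[x_{k+1}-x_k]=\nabla_\mu\frac{\lambda-\mu}{\lambda+\mu}=-\frac{2\lambda}{(\lambda+\mu)^2}$, where $x_{k+1}-x_k=\mathbf 1\{\tau^A<w/\mu\}-\mathbf 1\{\tau^A>w/\mu\}$. Let $G_{\beta,1},\dots,G_{\beta,B}$ be i.i.d. copies of $G_\beta$ and consider the estimator $\frac1B\sum_{i=1}^B G_{\beta,i}$. Then the choice of $\beta$ minimizing the mean-squared error of this estimator (with respect to the target) is $\beta^*=O(B^{1/5})$, and the resulting mean-squared error satisfies $\mathrm{MSE}(\beta^* )=O(B^{-4/5})$.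
   Context: The derivative in $G_\beta$ is taken with respect to $\mu$ holding $\tau^A$ and $w$ fixed. The asymptotics are as $B\to\infty$. *)

theory Defs
  imports "HOL-Probability.Probability" "HOL-Library.Landau_Symbols"
begin

definition G :: "real \<Rightarrow> real \<Rightarrow> real \<times> real \<Rightarrow> real" where
  "G beta mu tw = deriv (\<lambda>m. (exp (- beta * fst tw) - exp (- beta * snd tw / m)) /
                              (exp (- beta * fst tw) + exp (- beta * snd tw / m))) mu"

definition sample_law :: "real \<Rightarrow> (real \<times> real) measure" where
  "sample_law lam = density lborel (exponential_density lam) \<Otimes>\<^sub>M density lborel (exponential_density 1)"

definition target :: "real \<Rightarrow> real \<Rightarrow> real" where
  "target lam mu = - 2 * lam / (lam + mu)\<^sup>2"

definition MSE :: "real \<Rightarrow> real \<Rightarrow> real \<Rightarrow> nat \<Rightarrow> real" where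
  "MSE lam mu beta B = (\<integral>\<omega>. ((\<Sum>i<B. G beta mu (\<omega> i)) / real B - target lam mu)\<^sup>2
                          \<partial>(PiM {..<B} (\<lambda>_. sample_law lam)))"

end

theory Submission
  imports Defs "HOL-Real_Asymp.Real_Asymp"
begin

(* Writing \<psi> for the logistic density, the pathwise estimator is
   G = -2 \<beta> w \<psi>(\<beta> (\<tau> - w/\<mu>)) / \<mu>^2, and the target is the same expression with the kernel
   \<beta> \<psi>(\<beta> (\<tau> - v)) replaced by a point mass at \<tau> = v = w/\<mu>.  As \<psi> is even with unit mass,
   smoothing the Exp(\<lambda>) density at v with this kernel costs O(\<beta>^-2) by a second-order Taylor
   expansion, up to a term exp(-\<beta> v/2) from the kink of the density at 0, which also
   integrates to O(\<beta>^-2); so the bias is O(\<beta>^-2).  The second moment of G is of exact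
   order \<beta>.  Hence MSE(\<beta>) = bias^2 + Var/B with bias^2 = O(\<beta>^-4) and c \<beta> - D \<le> Var \<le> V \<beta>.
   Comparing with \<beta> = B^(1/5) bounds the optimal MSE by O(B^(-4/5)); since Var/B is at most
   the MSE, the optimal \<beta> is then O(B^(1/5)). *)

section \<open>Mean squared error of a sample mean\<close>

lemma (in prob_space) integral_PiM_coordinate_products:
  fixes Y :: "'a \<Rightarrow> real" and B :: nat
  assumes Y: "integrable M Y" and Y2: "integrable M (\<lambda>x. Y x * Y x)" and ij: "i < B" "j < B"
  shows "integrable (PiM {..<B} (\<lambda>_. M)) (\<lambda>\<omega>. Y (\<omega> i) * Y (\<omega> j))"
    and "(\<integral>\<omega>. Y (\<omega> i) * Y (\<omega> j) \<partial>PiM {..<B} (\<lambda>_. M)) =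
           (if i = j then integral\<^sup>L M (\<lambda>x. Y x * Y x) else (integral\<^sup>L M Y)\<^sup>2)"
proof -
  interpret product_sigma_finite "\<lambda>_. M"
    by (simp add: product_sigma_finite_def sigma_finite_measure_axioms)
  define f where "f k x = (if k = i then Y x else 1) * (if k = j then Y x else 1)" for k x
  have int_f: "integrable M (f k)" for k
    unfolding f_def using Y Y2 by (cases "k = i"; cases "k = j") auto
  have prod_f: "(\<Prod>k<B. f k (\<omega> k)) = Y (\<omega> i) * Y (\<omega> j)" for \<omega>
    unfolding f_def using ij by (simp add: prod.distrib)
  show "integrable (PiM {..<B} (\<lambda>_. M)) (\<lambda>\<omega>. Y (\<omega> i) * Y (\<omega> j))"
    using product_integrable_prod[of "{..<B}" f] int_f by (simp add: prod_f)
  have "(\<integral>\<omega>. Y (\<omega> i) * Y (\<omega> j) \<partial>PiM {..<B} (\<lambda>_. M)) = (\<Prod>k<B. integral\<^sup>L M (f k))"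
    using product_integral_prod[of "{..<B}" f] int_f by (simp add: prod_f)
  also have "\<dots> = (if i = j then integral\<^sup>L M (\<lambda>x. Y x * Y x) else (integral\<^sup>L M Y)\<^sup>2)"
  proof (cases "i = j")
    case True
    then have "integral\<^sup>L M (f k) = (if k = i then integral\<^sup>L M (\<lambda>x. Y x * Y x) else 1)" for k
      unfolding f_def by (auto simp: prob_space)
    then show ?thesis using True ij by simp
  next
    case False
    then have "integral\<^sup>L M (f k) =
        (if k = i then integral\<^sup>L M Y else 1) * (if k = j then integral\<^sup>L M Y else 1)" for k
      unfolding f_def by (auto simp: prob_space)
    then show ?thesis using False ij by (simp add: prod.distrib power2_eq_square)
  qed
  finally show "(\<integral>\<omega>. Y (\<omega> i) * Y (\<omega> j) \<partial>PiM {..<B} (\<lambda>_. M)) =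
      (if i = j then integral\<^sup>L M (\<lambda>x. Y x * Y x) else (integral\<^sup>L M Y)\<^sup>2)" .
qed

lemma (in prob_space) bias_variance_decomposition:
  fixes X :: "'a \<Rightarrow> real" and B :: nat
  assumes X: "integrable M X" and X2: "integrable M (\<lambda>x. (X x)\<^sup>2)" and B: "B \<ge> 1"
  shows "(\<integral>\<omega>. ((\<Sum>i<B. X (\<omega> i)) / real B - t)\<^sup>2 \<partial>PiM {..<B} (\<lambda>_. M))
       = (integral\<^sup>L M X - t)\<^sup>2 + (integral\<^sup>L M (\<lambda>x. (X x)\<^sup>2) - (integral\<^sup>L M X)\<^sup>2) / real B"
proof -
  define Y where "Y x = X x - t" for x
  have Y: "integrable M Y" unfolding Y_def using X by auto
  have Y_sq: "(\<lambda>x. Y x * Y x) = (\<lambda>x. (X x)\<^sup>2 - 2 * t * X x + t\<^sup>2)"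
    unfolding Y_def by (auto simp: power2_eq_square algebra_simps)
  have Y2: "integrable M (\<lambda>x. Y x * Y x)" unfolding Y_sq using X X2 by auto
  have EY: "integral\<^sup>L M Y = integral\<^sup>L M X - t" unfolding Y_def using X by (simp add: prob_space)
  have EY2: "integral\<^sup>L M (\<lambda>x. Y x * Y x) =
      integral\<^sup>L M (\<lambda>x. (X x)\<^sup>2) - 2 * t * integral\<^sup>L M X + t\<^sup>2"
    unfolding Y_sq using X X2 by (simp add: prob_space)
  let ?P = "PiM {..<B} (\<lambda>_. M)"
  note products = integral_PiM_coordinate_products[OF Y Y2]
  have sq: "((\<Sum>i<B. X (\<omega> i)) / real B - t)\<^sup>2 = (\<Sum>i<B. \<Sum>j<B. Y (\<omega> i) * Y (\<omega> j)) / (real B)\<^sup>2" for \<omega>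
  proof -
    have "(\<Sum>i<B. X (\<omega> i)) / real B - t = (\<Sum>i<B. Y (\<omega> i)) / real B"
      using B by (simp add: Y_def sum_subtractf field_simps)
    then show ?thesis by (simp add: power_divide power2_eq_square sum_product)
  qed
  have "(\<integral>\<omega>. (\<Sum>i<B. \<Sum>j<B. Y (\<omega> i) * Y (\<omega> j)) \<partial>?P) =
      (\<Sum>i<B. (\<integral>\<omega>. (\<Sum>j<B. Y (\<omega> i) * Y (\<omega> j)) \<partial>?P))"
    by (rule Bochner_Integration.integral_sum)
       (auto intro!: Bochner_Integration.integrable_sum products(1))
  also have "\<dots> = (\<Sum>i<B. \<Sum>j<B. (\<integral>\<omega>. Y (\<omega> i) * Y (\<omega> j) \<partial>?P))"
    by (intro sum.cong refl Bochner_Integration.integral_sum) (auto intro!: products(1))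
  finally have "(\<integral>\<omega>. ((\<Sum>i<B. X (\<omega> i)) / real B - t)\<^sup>2 \<partial>?P)
      = (\<Sum>i<B. \<Sum>j<B. (\<integral>\<omega>. Y (\<omega> i) * Y (\<omega> j) \<partial>?P)) / (real B)\<^sup>2"
    unfolding sq by simp
  also have "\<dots> =
      (\<Sum>i<B. integral\<^sup>L M (\<lambda>x. Y x * Y x) + (real B - 1) * (integral\<^sup>L M Y)\<^sup>2) / (real B)\<^sup>2"
  proof -
    have "(\<Sum>j<B. (\<integral>\<omega>. Y (\<omega> i) * Y (\<omega> j) \<partial>?P)) =
        integral\<^sup>L M (\<lambda>x. Y x * Y x) + (real B - 1) * (integral\<^sup>L M Y)\<^sup>2" if i: "i < B" for i
    proof -
      have "(\<Sum>j<B. (\<integral>\<omega>. Y (\<omega> i) * Y (\<omega> j) \<partial>?P)) =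
          (\<Sum>j<B. (if i = j then integral\<^sup>L M (\<lambda>x. Y x * Y x) - (integral\<^sup>L M Y)\<^sup>2 else 0)
                  + (integral\<^sup>L M Y)\<^sup>2)"
        using i by (intro sum.cong) (auto simp: products(2))
      then show ?thesis using i by (simp add: sum.distrib algebra_simps)
    qed
    then show ?thesis by simp
  qed
  finally show ?thesis
    using B unfolding EY EY2 by (simp add: field_simps power2_eq_square)
qed

lemma mse_at_fifth_root_le:
  fixes mse :: "real \<Rightarrow> nat \<Rightarrow> real" and bias var :: "real \<Rightarrow> real" and B :: nat
  assumes mse_eq: "\<And>beta. beta > 0 \<Longrightarrow> mse beta B = (bias beta)\<^sup>2 + var beta / real B"
    and bias_le: "\<And>beta. beta \<ge> beta_min \<Longrightarrow> \<bar>bias beta\<bar> \<le> C / beta\<^sup>2"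
    and var_le: "\<And>beta. beta > 0 \<Longrightarrow> var beta \<le> V * beta"
    and B: "B \<ge> 1" and beta_min: "real B powr (1/5) \<ge> beta_min"
  shows "mse (real B powr (1/5)) B \<le> (C\<^sup>2 + V) * real B powr (-4/5)"
proof -
  define b where "b = real B powr (1/5)"
  have B_pos: "real B > 0" using B by simp
  then have b_pos: "b > 0" by (simp add: b_def)
  have "(bias b)\<^sup>2 \<le> (C / b\<^sup>2)\<^sup>2"
    using bias_le[of b] beta_min unfolding b_def by (metis abs_ge_zero power2_abs power_mono)
  also have "(C / b\<^sup>2)\<^sup>2 = C\<^sup>2 / b ^ 4"
    by (simp add: power_divide flip: power_mult)
  also have "b ^ 4 = real B powr (4/5)"
    unfolding b_def using B_pos by (simp add: powr_power)
  also have "C\<^sup>2 / real B powr (4/5) = C\<^sup>2 * real B powr (-4/5)"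
    by (simp add: powr_minus_divide)
  finally have bias_sq: "(bias b)\<^sup>2 \<le> C\<^sup>2 * real B powr (-4/5)" .
  have "var b / real B \<le> V * b / real B"
    using var_le[OF b_pos] B_pos by (intro divide_right_mono) auto
  also have "\<dots> = V * (real B powr (1/5) / real B powr 1)"
    using B_pos by (simp add: b_def)
  also have "\<dots> = V * real B powr (-4/5)"
    unfolding powr_diff[symmetric] by simp
  finally show ?thesis
    using bias_sq mse_eq[OF b_pos] unfolding b_def by (simp add: algebra_simps)
qed

lemma minimiser_le_fifth_root:
  fixes mse :: "real \<Rightarrow> nat \<Rightarrow> real" and bias var :: "real \<Rightarrow> real" and B :: nat
  assumes mse_eq: "\<And>beta. beta > 0 \<Longrightarrow> mse beta B = (bias beta)\<^sup>2 + var beta / real B"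
    and var_ge: "\<And>beta. beta \<ge> beta_min \<Longrightarrow> c * beta - D \<le> var beta"
    and c: "c > 0" and B: "B \<ge> 1" and beta: "beta > 0"
    and mse_le: "mse beta B \<le> K * real B powr (-4/5)"
  shows "beta \<le> max beta_min ((K + \<bar>D\<bar>) / c) * real B powr (1/5)"
proof -
  have B_pos: "real B > 0" using B by simp
  have root_ge_1: "real B powr (1/5) \<ge> 1" using B by (intro ge_one_powr_ge_zero) auto
  show ?thesis
  proof (cases "beta < beta_min")
    case True
    then have "beta \<le> beta_min * 1" by simp
    also have "\<dots> \<le> max beta_min ((K + \<bar>D\<bar>) / c) * real B powr (1/5)"
      using True beta root_ge_1 by (intro mult_mono) auto
    finally show ?thesis .
  next
    case False
    have "var beta / real B \<le> K * real B powr (-4/5)"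
      using mse_le mse_eq[OF beta] zero_le_power2[of "bias beta"] by linarith
    then have "var beta \<le> K * (real B powr (-4/5) * real B powr 1)"
      using B_pos by (simp add: field_simps)
    also have "real B powr (-4/5) * real B powr 1 = real B powr (1/5)"
      unfolding powr_add[symmetric] by simp
    finally have "c * beta \<le> K * real B powr (1/5) + \<bar>D\<bar> * 1"
      using var_ge[of beta] False by simp
    also have "\<dots> \<le> (K + \<bar>D\<bar>) * real B powr (1/5)"
      using mult_left_mono[OF root_ge_1, of "\<bar>D\<bar>"] by (simp add: distrib_right)
    finally have "beta \<le> (K + \<bar>D\<bar>) / c * real B powr (1/5)"
      using c by (simp add: field_simps)
    also have "\<dots> \<le> max beta_min ((K + \<bar>D\<bar>) / c) * real B powr (1/5)"
      by (intro mult_right_mono) auto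
    finally show ?thesis .
  qed
qed

lemma bias_variance_tradeoff_rates:
  fixes mse :: "real \<Rightarrow> nat \<Rightarrow> real" and bias var :: "real \<Rightarrow> real" and beta_opt :: "nat \<Rightarrow> real"
  assumes mse_eq: "\<And>beta B. beta > 0 \<Longrightarrow> B \<ge> 1 \<Longrightarrow> mse beta B = (bias beta)\<^sup>2 + var beta / real B"
    and mse_nonneg: "\<And>beta B. 0 \<le> mse beta B"
    and bias_le: "\<And>beta. beta \<ge> beta_min \<Longrightarrow> \<bar>bias beta\<bar> \<le> C / beta\<^sup>2"
    and var_le: "\<And>beta. beta > 0 \<Longrightarrow> var beta \<le> V * beta"
    and var_ge: "\<And>beta. beta \<ge> beta_min \<Longrightarrow> c * beta - D \<le> var beta"
    and c: "c > 0" and beta_min: "beta_min \<ge> 1"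
    and opt: "\<forall>\<^sub>F B in at_top. beta_opt B > 0 \<and> (\<forall>beta > 0. mse (beta_opt B) B \<le> mse beta B)"
  shows "beta_opt \<in> O(\<lambda>B. real B powr (1/5)) \<and> (\<lambda>B. mse (beta_opt B) B) \<in> O(\<lambda>B. real B powr (-4/5))"
proof -
  define K where "K = C\<^sup>2 + V"
  define M where "M = max beta_min ((K + \<bar>D\<bar>) / c)"
  have large: "\<forall>\<^sub>F B in at_top. real B \<ge> beta_min ^ 5"
    by (rule eventually_mono[OF eventually_ge_at_top[of "nat \<lceil>beta_min ^ 5\<rceil>"]]) linarith
  have bounds: "\<forall>\<^sub>F B in at_top. \<bar>beta_opt B\<bar> \<le> M * \<bar>real B powr (1/5)\<bar> \<and>
                         \<bar>mse (beta_opt B) B\<bar> \<le> K * \<bar>real B powr (-4/5)\<bar>"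
    using eventually_conj[OF large opt]
  proof (rule eventually_mono, elim conjE)
    fix B :: nat
    assume B_large: "real B \<ge> beta_min ^ 5" and pos: "beta_opt B > 0"
      and minimal: "\<forall>beta > 0. mse (beta_opt B) B \<le> mse beta B"
    have "1 \<le> beta_min ^ 5" using beta_min by (rule one_le_power)
    then have B: "B \<ge> 1" using B_large by simp
    have "beta_min ^ 5 = beta_min powr 5"
      using beta_min powr_realpow[of beta_min 5] by simp
    then have "beta_min = (beta_min ^ 5) powr (1/5)"
      using beta_min by (simp only: powr_powr) simp
    also have "\<dots> \<le> real B powr (1/5)"
      using B_large beta_min by (intro powr_mono2) auto
    finally have "mse (real B powr (1/5)) B \<le> K * real B powr (-4/5)"
      unfolding K_def using mse_eq bias_le var_le B by (intro mse_at_fifth_root_le) auto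
    moreover have "mse (beta_opt B) B \<le> mse (real B powr (1/5)) B"
      using minimal B by simp
    ultimately have mse_le: "mse (beta_opt B) B \<le> K * real B powr (-4/5)"
      by linarith
    have "beta_opt B \<le> M * real B powr (1/5)"
      unfolding M_def using mse_eq var_ge c B pos mse_le by (intro minimiser_le_fifth_root) auto
    then show "\<bar>beta_opt B\<bar> \<le> M * \<bar>real B powr (1/5)\<bar> \<and>
               \<bar>mse (beta_opt B) B\<bar> \<le> K * \<bar>real B powr (-4/5)\<bar>"
      using pos mse_le mse_nonneg[of "beta_opt B" B] by simp
  qed
  show ?thesis
  proof
    show "beta_opt \<in> O(\<lambda>B. real B powr (1/5))"
      by (rule bigoI[where c = M]) (rule eventually_mono[OF bounds], simp)
    show "(\<lambda>B. mse (beta_opt B) B) \<in> O(\<lambda>B. real B powr (-4/5))"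
      by (rule bigoI[where c = K]) (rule eventually_mono[OF bounds], simp)
  qed
qed

section \<open>The logistic density\<close>

definition logistic_density :: "real \<Rightarrow> real" where
  "logistic_density s = exp s / (1 + exp s)\<^sup>2"

lemma one_plus_exp_pos [simp]: "0 < 1 + exp (x::real)"
  by (simp add: add_pos_pos)

lemma one_plus_exp_neq_zero [simp]: "1 + exp (x::real) \<noteq> 0"
  using one_plus_exp_pos[of x] by linarith

lemma logistic_density_pos: "0 < logistic_density s"
  unfolding logistic_density_def by simp

lemma logistic_density_nonneg: "0 \<le> logistic_density s"
  using logistic_density_pos[of s] by simp

lemma borel_measurable_logistic_density [measurable]: "logistic_density \<in> borel_measurable borel"
  unfolding logistic_density_def by measurable

lemma logistic_density_minus: "logistic_density (- s) = logistic_density s"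
  unfolding logistic_density_def by (simp add: exp_minus field_simps power2_eq_square)

lemma logistic_density_le_quarter: "logistic_density s \<le> 1 / 4"
proof -
  have "4 * exp s \<le> (1 + exp s)\<^sup>2"
    using sum_squares_bound[of 1 "exp s"] by (simp add: power2_eq_square algebra_simps)
  then show ?thesis unfolding logistic_density_def by (simp add: field_simps)
qed

lemma logistic_density_le_exp_abs: "logistic_density s \<le> exp (- \<bar>s\<bar>)"
proof -
  have "logistic_density \<bar>s\<bar> \<le> exp (- \<bar>s\<bar>)"
  proof -
    have "exp \<bar>s\<bar> * exp \<bar>s\<bar> \<le> (1 + exp \<bar>s\<bar>)\<^sup>2"
      by (simp add: power2_eq_square algebra_simps)
    then have "exp \<bar>s\<bar> / (1 + exp \<bar>s\<bar>)\<^sup>2 \<le> exp \<bar>s\<bar> / (exp \<bar>s\<bar> * exp \<bar>s\<bar>)"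
      by (intro divide_left_mono) auto
    then show ?thesis unfolding logistic_density_def by (simp add: exp_minus field_simps)
  qed
  then show ?thesis using logistic_density_minus[of s] by (cases "s \<ge> 0") auto
qed

lemma exp_abs_le_logistic_density: "exp (- \<bar>s\<bar>) / 4 \<le> logistic_density s"
proof -
  have "exp (- \<bar>s\<bar>) / 4 \<le> logistic_density \<bar>s\<bar>"
  proof -
    have e: "1 \<le> exp \<bar>s\<bar>" by simp
    moreover have "(1 + exp \<bar>s\<bar>)\<^sup>2 = 1 + 2 * exp \<bar>s\<bar> + exp \<bar>s\<bar> * exp \<bar>s\<bar>"
      by (simp add: power2_eq_square algebra_simps)
    ultimately have "(1 + exp \<bar>s\<bar>)\<^sup>2 \<le> 4 * (exp \<bar>s\<bar> * exp \<bar>s\<bar>)"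
      using mult_right_mono[OF e, of "exp \<bar>s\<bar>"] by linarith
    then have "exp \<bar>s\<bar> / (4 * (exp \<bar>s\<bar> * exp \<bar>s\<bar>)) \<le> exp \<bar>s\<bar> / (1 + exp \<bar>s\<bar>)\<^sup>2"
      by (intro divide_left_mono) auto
    then show ?thesis unfolding logistic_density_def by (simp add: exp_minus field_simps)
  qed
  then show ?thesis using logistic_density_minus[of s] by (cases "s \<ge> 0") auto
qed

lemma integrable_abs_power_exp_half_abs:
  "integrable lborel (\<lambda>s::real. \<bar>s\<bar> ^ n * exp (- \<bar>s\<bar> / 2))"
proof -
  let ?g = "\<lambda>s::real. erlang_density 0 (1/2) s * s ^ n"
  have "integrable lborel ?g"
    by (rule integrableI_nonneg)
       (use nn_integral_erlang_ith_moment[of "1/2" 0 n] in \<open>auto simp: erlang_density_def\<close>)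
  moreover from this have "integrable lborel (\<lambda>s. ?g (0 + (-1) * s))"
    by (rule lborel_integrable_real_affine) simp
  ultimately have "integrable lborel (\<lambda>s. 2 * (?g s + ?g (0 + (-1) * s)))"
    by auto
  then show ?thesis
    by (rule Bochner_Integration.integrable_bound)
       (auto intro!: AE_I2 simp: erlang_density_def power_minus_even power_abs)
qed

lemma integrable_abs_power_logistic_density:
  "integrable lborel (\<lambda>s. \<bar>s\<bar> ^ n * logistic_density s)"
  by (rule Bochner_Integration.integrable_bound[OF integrable_abs_power_exp_half_abs[of n]])
     (auto intro!: AE_I2 mult_left_mono order.trans[OF logistic_density_le_exp_abs]
           simp: abs_mult logistic_density_nonneg)

lemma integrable_logistic_density: "integrable lborel logistic_density"
  using integrable_abs_power_logistic_density[of 0] by simp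

lemma integrable_id_logistic_density: "integrable lborel (\<lambda>s. s * logistic_density s)"
  by (rule Bochner_Integration.integrable_bound[OF integrable_abs_power_logistic_density[of 1]])
     (auto simp: abs_mult)

lemma integral_id_logistic_density: "(\<integral>s. s * logistic_density s \<partial>lborel) = 0"
proof -
  have "(\<integral>s. s * logistic_density s \<partial>lborel) =
      \<bar>-1\<bar> *\<^sub>R (\<integral>s. (0 + (-1) * s) * logistic_density (0 + (-1) * s) \<partial>lborel)"
    by (rule lborel_integral_real_affine) simp
  also have "\<dots> = - (\<integral>s. s * logistic_density s \<partial>lborel)"
    by (simp add: logistic_density_minus)
  finally show ?thesis by simp
qed

lemma integral_logistic_density: "(\<integral>s. logistic_density s \<partial>lborel) = 1"
proof -
  let ?F = "\<lambda>s::real. 1 / (1 + exp (- s))"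
  have F': "(?F has_real_derivative logistic_density s) (at s)" for s
  proof -
    have "(?F has_real_derivative logistic_density (- s)) (at s)"
      unfolding logistic_density_def
      by (auto intro!: derivative_eq_intros simp: power2_eq_square field_simps)
    then show ?thesis by (simp only: logistic_density_minus)
  qed
  have "((?F \<circ> real_of_ereal) \<longlongrightarrow> 0) (at_right (-\<infinity>))"
    unfolding ereal_tendsto_simps
    by real_asymp
  moreover have "((?F \<circ> real_of_ereal) \<longlongrightarrow> 1) (at_left \<infinity>)"
    unfolding ereal_tendsto_simps by real_asymp
  moreover have "isCont logistic_density s" for s
    unfolding logistic_density_def by (auto intro!: continuous_intros)
  ultimately have "(LBINT s=-\<infinity>..\<infinity>. logistic_density s) = 1 - 0"
    by (intro interval_integral_FTC_nonneg) (auto simp: F' logistic_density_nonneg)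
  then show ?thesis
    by (simp add: interval_lebesgue_integral_def set_lebesgue_integral_def)
qed

section \<open>The sampling law and the estimator\<close>

lemma has_bochner_integral_exponential_moment:
  assumes "k > 0"
  shows "has_bochner_integral lborel (\<lambda>w. exponential_density k w * w ^ n) (fact n / k ^ n)"
  by (rule has_bochner_integral_nn_integral)
     (use assms nn_integral_erlang_ith_moment[OF assms, of 0 n] in \<open>auto simp: erlang_density_def\<close>)

lemma has_bochner_integral_exponential_moment_exp:
  assumes "r \<ge> 0"
  shows "has_bochner_integral lborel (\<lambda>w. exponential_density 1 w * w ^ n * exp (- r * w))
           (fact n / (1 + r) ^ (n + 1))"
proof -
  have "(\<lambda>w. exponential_density 1 w * w ^ n * exp (- r * w)) =
      (\<lambda>w. 1 / (1 + r) * (exponential_density (1 + r) w * w ^ n))"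
    using assms by (auto simp: fun_eq_iff exponential_density_def mult_exp_exp field_simps)
  moreover have "fact n / (1 + r) ^ (n + 1) = 1 / (1 + r) * (fact n / (1 + r) ^ n)"
    by simp
  moreover have "1 + r > 0" using assms by simp
  ultimately show ?thesis
    by (simp only:) (intro has_bochner_integral_mult_right has_bochner_integral_exponential_moment)
qed

lemma prob_space_sample_law: "lam > 0 \<Longrightarrow> prob_space (sample_law lam)"
  unfolding sample_law_def by (intro prob_space_pair prob_space_exponential_density) auto

lemma sets_sample_law: "sets (sample_law lam) = sets (borel \<Otimes>\<^sub>M borel)"
  unfolding sample_law_def by (intro sets_pair_measure_cong) auto

lemma pair_sigma_finite_sample_law:
  "lam > 0 \<Longrightarrow> pair_sigma_finite (density lborel (exponential_density lam))
                                  (density lborel (exponential_density 1))"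
  by (simp add: pair_sigma_finite_def prob_space_exponential_density prob_space_imp_sigma_finite)

lemma integrable_sample_law:
  assumes lam: "lam > 0" and F [measurable]: "F \<in> borel_measurable (borel \<Otimes>\<^sub>M borel)"
    and bound: "\<And>t w. \<bar>F (t, w)\<bar> \<le> C * \<bar>w\<bar> ^ n"
  shows "integrable (sample_law lam) F"
proof -
  interpret pair_sigma_finite "density lborel (exponential_density lam)"
      "density lborel (exponential_density 1)"
    using pair_sigma_finite_sample_law[OF lam] .
  interpret M1: prob_space "density lborel (exponential_density lam)"
    using prob_space_exponential_density[OF lam] .
  have "emeasure (density lborel (exponential_density lam)) UNIV = 1"
    using M1.emeasure_space_1 by simp
  then have "(\<integral>\<^sup>+ x. ennreal (\<bar>snd x\<bar> ^ n) \<partial>sample_law lam) =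
      (\<integral>\<^sup>+ w. ennreal (\<bar>w\<bar> ^ n) \<partial>density lborel (exponential_density 1))"
    unfolding sample_law_def
    by (subst nn_integral_snd[symmetric]) auto
  also have "\<dots> = (\<integral>\<^sup>+ w. ennreal (exponential_density 1 w * w ^ n) \<partial>lborel)"
    by (subst nn_integral_density)
       (auto intro!: nn_integral_cong simp: ennreal_mult[symmetric] erlang_density_def)
  also have "\<dots> = ennreal (fact n)"
    using nn_integral_erlang_ith_moment[of 1 0 n] by simp
  finally have "integrable (sample_law lam) (\<lambda>x. \<bar>snd x\<bar> ^ n)"
    by (intro integrableI_nonneg) (auto simp: measurable_cong_sets[OF sets_sample_law refl])
  then have "integrable (sample_law lam) (\<lambda>x. C * \<bar>snd x\<bar> ^ n)"
    by (rule integrable_mult_right)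
  then show ?thesis
    by (rule Bochner_Integration.integrable_bound)
       (auto intro!: AE_I2 order.trans[OF bound]
             simp: measurable_cong_sets[OF sets_sample_law refl])
qed

lemma integral_sample_law:
  assumes lam: "lam > 0" and F [measurable]: "F \<in> borel_measurable (borel \<Otimes>\<^sub>M borel)"
    and int_F: "integrable (sample_law lam) F"
  shows "integral\<^sup>L (sample_law lam) F =
    (\<integral>w. exponential_density 1 w * (\<integral>t. exponential_density lam t * F (t, w) \<partial>lborel) \<partial>lborel)"
proof -
  interpret pair_sigma_finite "density lborel (exponential_density lam)"
      "density lborel (exponential_density 1)"
    using pair_sigma_finite_sample_law[OF lam] .
  have inner: "(\<integral>t. F (t, w) \<partial>density lborel (exponential_density lam)) =
      (\<integral>t. exponential_density lam t * F (t, w) \<partial>lborel)" for w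
    using lam by (subst integral_density) (auto simp: exponential_density_nonneg)
  have "(\<lambda>w. \<integral>t. F (t, w) \<partial>density lborel (exponential_density lam)) \<in> borel_measurable borel"
    by (rule M1.borel_measurable_lebesgue_integral) (simp add: measurable_split_conv)
  then have "(\<integral>w. (\<integral>t. F (t, w) \<partial>density lborel (exponential_density lam))
               \<partial>density lborel (exponential_density 1)) =
      (\<integral>w. exponential_density 1 w * (\<integral>t. exponential_density lam t * F (t, w) \<partial>lborel) \<partial>lborel)"
    by (subst integral_density) (auto simp: inner exponential_density_nonneg)
  with integral_snd[of "\<lambda>t w. F (t, w)"] int_F show ?thesis
    unfolding sample_law_def by simp
qed

lemma G_eq:
  assumes mu: "mu > 0"
  shows "G beta mu (t, w) = - 2 * beta * w * logistic_density (beta * (t - w / mu)) / mu\<^sup>2"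
proof -
  define A E where "A = exp (- beta * t)" and "E = exp (- beta * w / mu)"
  have pos: "A > 0" "E > 0" by (auto simp: A_def E_def)
  have A_plus_exp: "A + exp x \<noteq> 0" for x
    using pos(1) exp_gt_zero[of x] by linarith
  have logistic: "A * E / (A + E)\<^sup>2 = logistic_density (beta * (t - w / mu))"
  proof -
    have "exp (beta * (t - w / mu)) = E / A"
      unfolding A_def E_def by (simp add: exp_diff[symmetric] algebra_simps diff_divide_distrib)
    then have "logistic_density (beta * (t - w / mu)) = (E / A) / (1 + E / A)\<^sup>2"
      unfolding logistic_density_def by simp
    then show ?thesis using pos by (simp add: field_simps power2_eq_square)
  qed
  have "((\<lambda>m. (A - exp (- beta * w / m)) / (A + exp (- beta * w / m))) has_real_derivative
      - 2 * beta * w * logistic_density (beta * (t - w / mu)) / mu\<^sup>2) (at mu)"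
    using mu A_plus_exp unfolding logistic[symmetric] E_def
    by (auto intro!: derivative_eq_intros simp: field_simps power2_eq_square)
  then show ?thesis
    unfolding G_def A_def by (simp add: DERIV_imp_deriv)
qed

lemma G_power_eq:
  assumes "mu > 0"
  shows "G beta mu (t, w) ^ n =
    (- 2 * beta / mu\<^sup>2) ^ n * (w ^ n * logistic_density (beta * (t - w / mu)) ^ n)"
proof -
  have "G beta mu (t, w) = (- 2 * beta / mu\<^sup>2) * (w * logistic_density (beta * (t - w / mu)))"
    using G_eq[OF assms] by simp
  then show ?thesis by (simp only: power_mult_distrib)
qed

lemma G_power_fun_eq:
  "mu > 0 \<Longrightarrow> (\<lambda>x. G beta mu x ^ n) =
     (\<lambda>(t, w). (- 2 * beta / mu\<^sup>2) ^ n * (w ^ n * logistic_density (beta * (t - w / mu)) ^ n))"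
  by (auto simp: fun_eq_iff G_power_eq)

definition expected_logistic_power :: "real \<Rightarrow> real \<Rightarrow> real \<Rightarrow> nat \<Rightarrow> real" where
  "expected_logistic_power lam beta v n =
     (\<integral>t. exponential_density lam t * logistic_density (beta * (t - v)) ^ n \<partial>lborel)"

lemma borel_measurable_expected_logistic_power [measurable]:
  "(\<lambda>v. expected_logistic_power lam beta v n) \<in> borel_measurable borel"
  unfolding expected_logistic_power_def by measurable

lemma integrable_G_power:
  assumes lam: "lam > 0" and mu: "mu > 0"
  shows "integrable (sample_law lam) (\<lambda>x. G beta mu x ^ n)"
proof -
  let ?C = "(2 * \<bar>beta\<bar> / mu\<^sup>2 * (1 / 4)) ^ n"
  have bound: "\<bar>(- 2 * beta / mu\<^sup>2) ^ n * (w ^ n * logistic_density (beta * (t - w / mu)) ^ n)\<bar>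
      \<le> ?C * \<bar>w\<bar> ^ n" for t w
  proof -
    let ?\<psi> = "logistic_density (beta * (t - w / mu))"
    have "\<bar>(- 2 * beta / mu\<^sup>2) ^ n * (w ^ n * ?\<psi> ^ n)\<bar> =
        (2 * \<bar>beta\<bar> / mu\<^sup>2) ^ n * (\<bar>w\<bar> ^ n * ?\<psi> ^ n)"
      by (simp add: abs_mult power_abs logistic_density_nonneg)
    also have "\<dots> \<le> (2 * \<bar>beta\<bar> / mu\<^sup>2) ^ n * (\<bar>w\<bar> ^ n * (1 / 4) ^ n)"
      by (intro mult_left_mono power_mono logistic_density_le_quarter logistic_density_nonneg) auto
    also have "\<dots> = ?C * \<bar>w\<bar> ^ n"
      by (simp only: power_mult_distrib mult_ac)
    finally show ?thesis .
  qed
  show ?thesis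
    unfolding G_power_fun_eq[OF mu]
    by (rule integrable_sample_law[OF lam, where C = ?C and n = n]) (measurable, use bound in simp)
qed

lemma integral_G_power:
  assumes lam: "lam > 0" and mu: "mu > 0"
  shows "integral\<^sup>L (sample_law lam) (\<lambda>x. G beta mu x ^ n) = (- 2 * beta / mu\<^sup>2) ^ n *
    (\<integral>w. exponential_density 1 w * w ^ n * expected_logistic_power lam beta (w / mu) n \<partial>lborel)"
proof -
  have inner: "(\<integral>t. exponential_density lam t * ((- 2 * beta / mu\<^sup>2) ^ n *
                  (w ^ n * logistic_density (beta * (t - w / mu)) ^ n)) \<partial>lborel) =
      (- 2 * beta / mu\<^sup>2) ^ n * (w ^ n * expected_logistic_power lam beta (w / mu) n)" for w
    unfolding expected_logistic_power_def
    by (simp flip: integral_mult_right_zero add: mult_ac)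
  have "integral\<^sup>L (sample_law lam) (\<lambda>x. G beta mu x ^ n) =
      (\<integral>w. exponential_density 1 w * (\<integral>t. exponential_density lam t * ((- 2 * beta / mu\<^sup>2) ^ n *
                  (w ^ n * logistic_density (beta * (t - w / mu)) ^ n)) \<partial>lborel) \<partial>lborel)"
    using integral_sample_law[OF lam _ integrable_G_power[OF lam mu]]
    by (simp add: G_power_fun_eq[OF mu] G_power_eq[OF mu])
  also have "\<dots> = (\<integral>w. (- 2 * beta / mu\<^sup>2) ^ n *
      (exponential_density 1 w * w ^ n * expected_logistic_power lam beta (w / mu) n) \<partial>lborel)"
    by (intro Bochner_Integration.integral_cong refl) (unfold inner, simp only: mult_ac)
  finally show ?thesis by simp
qed

section \<open>Smoothing the exponential density\<close>

lemma integrable_expected_logistic_power: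
  assumes lam: "lam > 0"
  shows "integrable lborel (\<lambda>t. exponential_density lam t * logistic_density (beta * (t - v)) ^ n)"
proof -
  have "integrable lborel (\<lambda>t. exponential_density lam t * t ^ 0)"
    using has_bochner_integral_exponential_moment[OF lam, of 0] by (rule integrable.intros)
  then show ?thesis
    by (rule Bochner_Integration.integrable_bound)
       (auto intro!: AE_I2 mult_left_le power_le_one order.trans[OF logistic_density_le_quarter]
             simp: abs_mult logistic_density_nonneg exponential_density_nonneg[OF lam])
qed

lemma exponential_density_le: "lam > 0 \<Longrightarrow> exponential_density lam x \<le> lam"
  by (simp add: exponential_density_def)

lemma expected_logistic_power_nonneg: "lam > 0 \<Longrightarrow> 0 \<le> expected_logistic_power lam beta v n"
  unfolding expected_logistic_power_def
  by (intro integral_nonneg_AE AE_I2) (simp add: exponential_density_nonneg logistic_density_nonneg)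

lemma expected_logistic_power_one_eq:
  assumes beta: "beta > 0"
  shows "beta * expected_logistic_power lam beta v 1 =
    (\<integral>s. exponential_density lam (v + s / beta) * logistic_density s \<partial>lborel)"
proof -
  have "expected_logistic_power lam beta v 1 = \<bar>1 / beta\<bar> *\<^sub>R
      (\<integral>s. exponential_density lam (v + 1 / beta * s) *
            logistic_density (beta * ((v + 1 / beta * s) - v)) ^ 1 \<partial>lborel)"
    unfolding expected_logistic_power_def by (rule lborel_integral_real_affine) (use beta in simp)
  then show ?thesis using beta by simp
qed

lemma expected_logistic_power_one_le:
  assumes lam: "lam > 0" and beta: "beta > 0"
  shows "expected_logistic_power lam beta v 1 \<le> lam / beta"
proof -
  have "beta * expected_logistic_power lam beta v 1 \<le> (\<integral>s. lam * logistic_density s \<partial>lborel)"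
    unfolding expected_logistic_power_one_eq[OF beta]
    by (rule integral_mono'[OF integrable_mult_right[OF integrable_logistic_density]])
       (use lam in \<open>auto intro!: mult_right_mono exponential_density_le
                         simp: logistic_density_nonneg\<close>)
  also have "\<dots> = lam" by (simp add: integral_logistic_density)
  finally show ?thesis using beta by (simp add: field_simps)
qed

lemma expected_logistic_power_two_le:
  assumes lam: "lam > 0" and beta: "beta > 0"
  shows "expected_logistic_power lam beta v 2 \<le> lam / (4 * beta)"
proof -
  have "expected_logistic_power lam beta v 2 \<le> (\<integral>t. 1 / 4 * (exponential_density lam t *
      logistic_density (beta * (t - v)) ^ 1) \<partial>lborel)"
    unfolding expected_logistic_power_def
  proof (rule integral_mono')
    show "integrable lborel (\<lambda>t. 1 / 4 * (exponential_density lam t *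
        logistic_density (beta * (t - v)) ^ 1))"
      by (intro integrable_mult_right integrable_expected_logistic_power[OF lam])
    fix t
    let ?\<psi> = "logistic_density (beta * (t - v))"
    have "?\<psi> ^ 2 \<le> 1 / 4 * ?\<psi>"
      using mult_right_mono[OF logistic_density_le_quarter logistic_density_nonneg]
      by (simp add: power2_eq_square)
    then show "exponential_density lam t * ?\<psi> ^ 2 \<le> 1 / 4 * (exponential_density lam t * ?\<psi> ^ 1)"
      using mult_left_mono exponential_density_nonneg[OF lam, of t] by fastforce
    show "0 \<le> 1 / 4 * (exponential_density lam t * ?\<psi> ^ 1)"
      by (simp add: exponential_density_nonneg[OF lam] logistic_density_nonneg)
  qed
  also have "\<dots> = 1 / 4 * expected_logistic_power lam beta v 1"
    unfolding expected_logistic_power_def by simp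
  also have "\<dots> \<le> 1 / 4 * (lam / beta)"
    using expected_logistic_power_one_le[OF lam beta] by simp
  finally show ?thesis by simp
qed

lemma expected_logistic_power_two_ge:
  assumes lam: "lam > 0" and beta: "beta \<ge> 1" and v: "v \<ge> 0"
  shows "lam * exp (- lam * (v + 1)) * (exp (-1) / 4)\<^sup>2 / beta \<le>
           expected_logistic_power lam beta v 2"
proof -
  define c where "c = lam * exp (- lam * (v + 1)) * (exp (-1) / 4)\<^sup>2"
  have "(\<integral>t. indicator {v .. v + 1 / beta} t * c \<partial>lborel) \<le> expected_logistic_power lam beta v 2"
    unfolding expected_logistic_power_def
  proof (rule integral_mono)
    show "integrable lborel (\<lambda>t. indicator {v .. v + 1 / beta} t * c)"
      by (intro integrable_mult_left integrable_real_indicator) (auto simp: emeasure_lborel_Icc_eq)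
    show "integrable lborel (\<lambda>t. exponential_density lam t * logistic_density (beta * (t - v)) ^ 2)"
      by (rule integrable_expected_logistic_power[OF lam])
    fix t :: real
    show "indicator {v .. v + 1 / beta} t * c \<le>
        exponential_density lam t * logistic_density (beta * (t - v)) ^ 2"
    proof (cases "t \<in> {v .. v + 1 / beta}")
      case True
      have "1 / beta \<le> 1" using beta by simp
      then have "lam * exp (- lam * (v + 1)) \<le> exponential_density lam t"
        using True v lam by (auto simp: exponential_density_def mult_ac)
      moreover have "exp (-1) / 4 \<le> logistic_density (beta * (t - v))"
      proof -
        have "\<bar>beta * (t - v)\<bar> \<le> 1" using True beta by (auto simp: field_simps)
        then have "exp (-1) \<le> exp (- \<bar>beta * (t - v)\<bar>)" by simp
        then show ?thesis
          using exp_abs_le_logistic_density[of "beta * (t - v)"] by linarith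
      qed
      then have "(exp (-1) / 4)\<^sup>2 \<le> logistic_density (beta * (t - v)) ^ 2"
        by (intro power_mono) auto
      ultimately show ?thesis
        using True lam unfolding c_def by (simp add: mult_mono)
    qed (simp add: exponential_density_nonneg[OF lam])
  qed
  also have "(\<integral>t. indicator {v .. v + 1 / beta} t * c \<partial>lborel) = c / beta"
    using beta by simp
  finally show ?thesis unfolding c_def .
qed

lemma abs_exp_minus_one_minus_le: "\<bar>exp x - 1 - x\<bar> \<le> exp \<bar>x\<bar> / 2 * (x::real)\<^sup>2"
proof -
  obtain t where t: "\<bar>t\<bar> \<le> \<bar>x\<bar>" and "exp x = (\<Sum>m<2. x ^ m / fact m) + exp t / fact 2 * x ^ 2"
    using Maclaurin_exp_le[of x 2] by blast
  then have "\<bar>exp x - 1 - x\<bar> = exp t / 2 * x\<^sup>2" by (simp add: eval_nat_numeral)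
  also have "\<dots> \<le> exp \<bar>x\<bar> / 2 * x\<^sup>2"
    using t by (intro mult_right_mono divide_right_mono) auto
  finally show ?thesis .
qed

text \<open>\<open>-lam * exponential_density lam v\<close> is the derivative of the density at \<open>v > 0\<close>, so this
  is its first-order Taylor remainder.\<close>
definition exp_density_remainder :: "real \<Rightarrow> real \<Rightarrow> real \<Rightarrow> real" where
  "exp_density_remainder lam v h =
     exponential_density lam (v + h) - exponential_density lam v
       + lam * exponential_density lam v * h"

lemma exp_density_remainder_le:
  assumes lam: "lam > 0" and v: "v \<ge> 0" and vh: "v + h \<ge> 0"
  shows "\<bar>exp_density_remainder lam v h\<bar> \<le> lam ^ 3 / 2 * h\<^sup>2 * exp (lam * \<bar>h\<bar>)"
proof -
  have "exp_density_remainder lam v h = lam * exp (- lam * v) * (exp (- lam * h) - 1 - (- lam * h))"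
    using v vh unfolding exp_density_remainder_def exponential_density_def
    by (simp add: algebra_simps flip: exp_add)
  also have "\<bar>\<dots>\<bar> = lam * exp (- lam * v) * \<bar>exp (- lam * h) - 1 - (- lam * h)\<bar>"
    using lam by (simp add: abs_mult)
  also have "\<dots> \<le> lam * 1 * (exp \<bar>- lam * h\<bar> / 2 * (- lam * h)\<^sup>2)"
    using lam v by (intro mult_mono abs_exp_minus_one_minus_le) auto
  also have "\<dots> = lam ^ 3 / 2 * h\<^sup>2 * exp (lam * \<bar>h\<bar>)"
    using lam by (simp add: abs_mult power2_eq_square power3_eq_cube)
  finally show ?thesis .
qed

lemma exp_density_remainder_le_kink:
  assumes lam: "lam > 0" and v: "v \<ge> 0" and vh: "v + h < 0"
  shows "\<bar>exp_density_remainder lam v h\<bar> \<le> lam * (1 + lam * \<bar>h\<bar>)"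
proof -
  have "exp_density_remainder lam v h = exponential_density lam v * (lam * h - 1)"
    using vh unfolding exp_density_remainder_def
    by (simp add: exponential_density_def algebra_simps)
  also have "\<bar>\<dots>\<bar> \<le> lam * (1 + lam * \<bar>h\<bar>)"
  proof -
    have "\<bar>lam * h - 1\<bar> \<le> 1 + lam * \<bar>h\<bar>"
      using abs_triangle_ineq4[of "lam * h" 1] lam by (simp add: abs_mult)
    then show ?thesis
      unfolding abs_mult abs_of_nonneg[OF exponential_density_nonneg[OF lam]]
      by (intro mult_mono exponential_density_le[OF lam])
         (use lam in \<open>auto simp: exponential_density_nonneg\<close>)
  qed
  finally show ?thesis .
qed

lemma exp_density_remainder_scaled_le:
  assumes lam: "lam > 0" and v: "v \<ge> 0" and beta: "beta \<ge> 4 * lam" "beta > 0"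
    and vs: "v + s / beta \<ge> 0"
  shows "\<bar>exp_density_remainder lam v (s / beta)\<bar> * exp (- \<bar>s\<bar>)
           \<le> lam ^ 3 / (2 * beta\<^sup>2) * (s\<^sup>2 * exp (- \<bar>s\<bar> / 2))"
proof -
  \<comment> \<open>\<open>beta \<ge> 4 * lam\<close> keeps the growth of the remainder below a quarter of the decay
    of the logistic density\<close>
  have "4 * lam * \<bar>s\<bar> \<le> beta * \<bar>s\<bar>"
    using mult_right_mono[OF beta(1), of "\<bar>s\<bar>"] by simp
  then have "lam * \<bar>s / beta\<bar> \<le> \<bar>s\<bar> / 4"
    using beta by (simp add: abs_divide field_simps)
  then have "lam * \<bar>s / beta\<bar> + - \<bar>s\<bar> \<le> - \<bar>s\<bar> / 2"
    by linarith
  then have decay: "exp (lam * \<bar>s / beta\<bar>) * exp (- \<bar>s\<bar>) \<le> exp (- \<bar>s\<bar> / 2)"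
    by (simp only: mult_exp_exp exp_le_cancel_iff)
  have "\<bar>exp_density_remainder lam v (s / beta)\<bar> * exp (- \<bar>s\<bar>) \<le>
      lam ^ 3 / 2 * (s / beta)\<^sup>2 * exp (lam * \<bar>s / beta\<bar>) * exp (- \<bar>s\<bar>)"
    using vs lam v by (intro mult_right_mono exp_density_remainder_le) auto
  also have "\<dots> \<le> lam ^ 3 / 2 * (s / beta)\<^sup>2 * exp (- \<bar>s\<bar> / 2)"
    unfolding mult.assoc[of "lam ^ 3 / 2 * (s / beta)\<^sup>2"]
    using decay lam by (intro mult_left_mono) auto
  also have "\<dots> = lam ^ 3 / (2 * beta\<^sup>2) * (s\<^sup>2 * exp (- \<bar>s\<bar> / 2))"
    by (simp add: power_divide)
  finally show ?thesis .
qed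

lemma exp_density_remainder_scaled_le_kink:
  assumes lam: "lam > 0" and v: "v \<ge> 0" and beta: "beta \<ge> 1" and vs: "v + s / beta < 0"
  shows "\<bar>exp_density_remainder lam v (s / beta)\<bar> * exp (- \<bar>s\<bar>)
           \<le> lam * exp (- beta * v / 2) * ((1 + lam * \<bar>s\<bar>) * exp (- \<bar>s\<bar> / 2))"
proof -
  have "beta * v \<le> \<bar>s\<bar>" using vs beta by (simp add: field_simps)
  then have "exp (- \<bar>s\<bar>) \<le> exp (- beta * v / 2) * exp (- \<bar>s\<bar> / 2)"
    by (simp flip: exp_add)
  moreover have "\<bar>exp_density_remainder lam v (s / beta)\<bar> \<le> lam * (1 + lam * \<bar>s\<bar>)"
  proof -
    have "lam * \<bar>s / beta\<bar> \<le> lam * \<bar>s\<bar>"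
      using lam beta mult_left_mono[OF beta abs_ge_zero[of s]]
      by (intro mult_left_mono) (auto simp: abs_divide divide_le_eq)
    then have "lam * (1 + lam * \<bar>s / beta\<bar>) \<le> lam * (1 + lam * \<bar>s\<bar>)"
      using lam by (intro mult_left_mono) auto
    then show ?thesis
      using exp_density_remainder_le_kink[OF lam v vs] by linarith
  qed
  ultimately have "\<bar>exp_density_remainder lam v (s / beta)\<bar> * exp (- \<bar>s\<bar>) \<le>
      lam * (1 + lam * \<bar>s\<bar>) * (exp (- beta * v / 2) * exp (- \<bar>s\<bar> / 2))"
    using lam by (intro mult_mono) auto
  also have "\<dots> = lam * exp (- beta * v / 2) * ((1 + lam * \<bar>s\<bar>) * exp (- \<bar>s\<bar> / 2))"
    by (simp only: mult_ac)
  finally show ?thesis .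
qed

lemma exp_density_remainder_logistic_le:
  assumes lam: "lam > 0" and v: "v \<ge> 0" and beta: "beta \<ge> 1" "beta \<ge> 4 * lam"
  shows "\<bar>exp_density_remainder lam v (s / beta) * logistic_density s\<bar>
     \<le> lam ^ 3 / (2 * beta\<^sup>2) * (s\<^sup>2 * exp (- \<bar>s\<bar> / 2))
       + lam * exp (- beta * v / 2) * ((1 + lam * \<bar>s\<bar>) * exp (- \<bar>s\<bar> / 2))"
    (is "?L \<le> ?A + ?B")
proof -
  have "0 \<le> ?A" and "0 \<le> ?B" using lam by auto
  moreover have "?L \<le> \<bar>exp_density_remainder lam v (s / beta)\<bar> * exp (- \<bar>s\<bar>)"
    unfolding abs_mult using logistic_density_le_exp_abs[of s]
    by (simp add: logistic_density_nonneg mult_left_mono)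
  moreover have "\<bar>exp_density_remainder lam v (s / beta)\<bar> * exp (- \<bar>s\<bar>) \<le> ?A \<or>
      \<bar>exp_density_remainder lam v (s / beta)\<bar> * exp (- \<bar>s\<bar>) \<le> ?B"
    using exp_density_remainder_scaled_le[OF lam v beta(2)] beta
      exp_density_remainder_scaled_le_kink[OF lam v beta(1)]
    by (cases "v + s / beta < 0") auto
  ultimately show ?thesis by linarith
qed

lemma expected_logistic_power_one_eq_remainder:
  assumes lam: "lam > 0" and beta: "beta > 0"
  shows "beta * expected_logistic_power lam beta v 1 - exponential_density lam v =
    (\<integral>s. exp_density_remainder lam v (s / beta) * logistic_density s \<partial>lborel)"
proof -
  let ?f = "exponential_density lam"
  have int_shifted: "integrable lborel (\<lambda>s. ?f (v + s / beta) * logistic_density s)"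
    by (rule Bochner_Integration.integrable_bound
               [OF integrable_mult_right[OF integrable_logistic_density, where c = lam]])
       (use lam in \<open>auto intro!: AE_I2 mult_right_mono exponential_density_le
                        simp: abs_mult exponential_density_nonneg logistic_density_nonneg\<close>)
  have "(\<lambda>s. exp_density_remainder lam v (s / beta) * logistic_density s) =
      (\<lambda>s. (?f (v + s / beta) * logistic_density s - ?f v * logistic_density s)
           + lam * ?f v / beta * (s * logistic_density s))"
    by (auto simp: fun_eq_iff exp_density_remainder_def algebra_simps)
  then have "(\<integral>s. exp_density_remainder lam v (s / beta) * logistic_density s \<partial>lborel) =
      (\<integral>s. ?f (v + s / beta) * logistic_density s \<partial>lborel)
      - (\<integral>s. ?f v * logistic_density s \<partial>lborel)
      + (\<integral>s. lam * ?f v / beta * (s * logistic_density s) \<partial>lborel)"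
    using int_shifted integrable_logistic_density integrable_id_logistic_density
    by (simp only: Bochner_Integration.integral_add Bochner_Integration.integral_diff
                   integrable_mult_right Bochner_Integration.integrable_diff)
  also have "\<dots> = (\<integral>s. ?f (v + s / beta) * logistic_density s \<partial>lborel)
      - ?f v * (\<integral>s. logistic_density s \<partial>lborel)
      + lam * ?f v / beta * (\<integral>s. s * logistic_density s \<partial>lborel)"
    by simp
  \<comment> \<open>the constant and linear terms are killed by unit mass and evenness of the kernel\<close>
  finally show ?thesis
    unfolding expected_logistic_power_one_eq[OF beta]
    by (simp add: integral_logistic_density integral_id_logistic_density)
qed

lemma logistic_smoothing_error_le:
  assumes lam: "lam > 0"
  obtains A B where "0 \<le> A" "0 \<le> B"
    "\<And>beta v. beta \<ge> 1 \<Longrightarrow> beta \<ge> 4 * lam \<Longrightarrow> v \<ge> 0 \<Longrightarrow>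
       \<bar>beta * expected_logistic_power lam beta v 1 - exponential_density lam v\<bar>
         \<le> A / beta\<^sup>2 + B * exp (- beta * v / 2)"
proof
  let ?e2 = "\<lambda>s::real. s\<^sup>2 * exp (- \<bar>s\<bar> / 2)"
  let ?e1 = "\<lambda>s::real. (1 + lam * \<bar>s\<bar>) * exp (- \<bar>s\<bar> / 2)"
  define A where "A = lam ^ 3 / 2 * (\<integral>s. ?e2 s \<partial>lborel)"
  define B where "B = lam * (\<integral>s. ?e1 s \<partial>lborel)"
  show "0 \<le> A" "0 \<le> B"
    unfolding A_def B_def using lam by (auto intro!: integral_nonneg_AE AE_I2)
  fix beta v :: real
  assume beta: "beta \<ge> 1" "beta \<ge> 4 * lam" and v: "v \<ge> 0"
  let ?R = "\<lambda>s. exp_density_remainder lam v (s / beta) * logistic_density s"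
  have int_e2: "integrable lborel ?e2"
    using integrable_abs_power_exp_half_abs[of 2] by simp
  have "integrable lborel (\<lambda>s. \<bar>s\<bar> ^ 0 * exp (- \<bar>s\<bar> / 2) + lam * (\<bar>s\<bar> ^ 1 * exp (- \<bar>s\<bar> / 2)))"
    by (intro Bochner_Integration.integrable_add integrable_mult_right
              integrable_abs_power_exp_half_abs)
  then have int_e1: "integrable lborel ?e1"
    by (simp add: distrib_right mult.assoc)
  have "\<bar>\<integral>s. ?R s \<partial>lborel\<bar> \<le> (\<integral>s. \<bar>?R s\<bar> \<partial>lborel)"
    by (rule integral_abs_bound)
  also have "\<dots> \<le> (\<integral>s. lam ^ 3 / (2 * beta\<^sup>2) * ?e2 s + lam * exp (- beta * v / 2) * ?e1 s \<partial>lborel)"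
    using exp_density_remainder_logistic_le[OF lam v beta] int_e1 int_e2 lam
    by (intro integral_mono') auto
  also have "\<dots> = A / beta\<^sup>2 + B * exp (- beta * v / 2)"
    unfolding A_def B_def using int_e1 int_e2 by simp
  finally show "\<bar>beta * expected_logistic_power lam beta v 1 - exponential_density lam v\<bar> \<le>
      A / beta\<^sup>2 + B * exp (- beta * v / 2)"
    using expected_logistic_power_one_eq_remainder[OF lam, of beta v] beta by simp
qed

section \<open>Bias and second moment of the estimator\<close>

lemma has_bochner_integral_target:
  assumes lam: "lam > 0" and mu: "mu > 0"
  shows "has_bochner_integral lborel
           (\<lambda>w. exponential_density 1 w * w * exponential_density lam (w / mu))
           (lam * mu\<^sup>2 / (lam + mu)\<^sup>2)"
proof -
  have "(\<lambda>w. exponential_density 1 w * w * exponential_density lam (w / mu)) =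
      (\<lambda>w. lam * (exponential_density 1 w * w ^ 1 * exp (- (lam / mu) * w)))"
    using mu by (auto simp: fun_eq_iff exponential_density_def algebra_simps divide_less_0_iff)
  moreover have "lam * mu\<^sup>2 / (lam + mu)\<^sup>2 = lam * (fact 1 / (1 + lam / mu) ^ (1 + 1))"
    using lam mu by (simp add: field_simps power2_eq_square)
  moreover have "lam / mu \<ge> 0" using lam mu by simp
  ultimately show ?thesis
    by (simp only:)
       (intro has_bochner_integral_mult_right has_bochner_integral_exponential_moment_exp)
qed

lemma integral_G:
  assumes lam: "lam > 0" and mu: "mu > 0"
  shows "integral\<^sup>L (sample_law lam) (G beta mu) = - 2 / mu\<^sup>2 *
    (\<integral>w. exponential_density 1 w * w * (beta * expected_logistic_power lam beta (w / mu) 1)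
       \<partial>lborel)"
  using integral_G_power[OF lam mu, of beta 1]
  by (simp add: mult_ac flip: integral_mult_right_zero)

lemma integrable_smoothed_exponential_moment:
  assumes lam: "lam > 0" and beta: "beta > 0"
  shows "integrable lborel
           (\<lambda>w. exponential_density 1 w * w * (beta * expected_logistic_power lam beta (w / mu) 1))"
    (is "integrable lborel ?p")
proof (rule Bochner_Integration.integrable_bound)
  show "integrable lborel (\<lambda>w. lam * (exponential_density 1 w * w ^ 1))"
    using has_bochner_integral_exponential_moment[of 1 1] by (auto intro: integrable.intros)
  show "AE w in lborel. norm (?p w) \<le> norm (lam * (exponential_density 1 w * w ^ 1))"
  proof (rule AE_I2)
    fix w
    have f1: "0 \<le> exponential_density 1 w * w"
      by (simp add: exponential_density_def)
    have "beta * expected_logistic_power lam beta (w / mu) 1 \<le> lam"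
      using expected_logistic_power_one_le[OF lam beta] beta by (simp add: field_simps)
    then have "?p w \<le> exponential_density 1 w * w * lam"
      by (rule mult_left_mono[OF _ f1])
    moreover have "0 \<le> ?p w"
      using f1 expected_logistic_power_nonneg[OF lam] beta by simp
    ultimately show "norm (?p w) \<le> norm (lam * (exponential_density 1 w * w ^ 1))"
      using f1 lam by (simp add: mult.commute)
  qed
qed measurable

lemma smoothed_exponential_moment_error_le:
  assumes lam: "lam > 0" and mu: "mu > 0"
  obtains C where "\<And>beta. beta \<ge> max 1 (4 * lam) \<Longrightarrow>
    \<bar>(\<integral>w. exponential_density 1 w * w * (beta * expected_logistic_power lam beta (w / mu) 1)
        \<partial>lborel) - (\<integral>w. exponential_density 1 w * w * exponential_density lam (w / mu) \<partial>lborel)\<bar>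
      \<le> C / beta\<^sup>2"
proof -
  obtain A B where AB: "0 \<le> A" "0 \<le> B" and smoothing:
    "\<And>beta v. beta \<ge> 1 \<Longrightarrow> beta \<ge> 4 * lam \<Longrightarrow> v \<ge> 0 \<Longrightarrow>
       \<bar>beta * expected_logistic_power lam beta v 1 - exponential_density lam v\<bar>
         \<le> A / beta\<^sup>2 + B * exp (- beta * v / 2)"
    using logistic_smoothing_error_le[OF lam] by blast
  let ?f1 = "\<lambda>w. exponential_density 1 w * w"
  have "\<bar>(\<integral>w. ?f1 w * (beta * expected_logistic_power lam beta (w / mu) 1) \<partial>lborel)
          - (\<integral>w. ?f1 w * exponential_density lam (w / mu) \<partial>lborel)\<bar> \<le> (A + 4 * mu\<^sup>2 * B) / beta\<^sup>2"
    if beta: "beta \<ge> max 1 (4 * lam)" for beta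
  proof -
    let ?p = "\<lambda>w. ?f1 w * (beta * expected_logistic_power lam beta (w / mu) 1)"
    let ?q = "\<lambda>w. ?f1 w * exponential_density lam (w / mu)"
    define r where "r = beta / (2 * mu)"
    let ?g = "\<lambda>w. A / beta\<^sup>2 * (exponential_density 1 w * w ^ 1)
                 + B * (exponential_density 1 w * w ^ 1 * exp (- r * w))"
    have beta_pos: "beta > 0" using beta by simp
    have r: "r > 0" using beta_pos mu by (simp add: r_def)
    have f1_nonneg: "0 \<le> ?f1 w" for w
      by (simp add: exponential_density_def)
    have int_p: "integrable lborel ?p"
      by (rule integrable_smoothed_exponential_moment[OF lam beta_pos])
    have int_q: "integrable lborel ?q"
      using has_bochner_integral_target[OF lam mu] by (auto intro: integrable.intros)
    have g: "has_bochner_integral lborel ?g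
        (A / beta\<^sup>2 * (fact 1 / 1 ^ 1) + B * (fact 1 / (1 + r) ^ (1 + 1)))"
      using r
      by (intro has_bochner_integral_add has_bochner_integral_mult_right
                has_bochner_integral_exponential_moment has_bochner_integral_exponential_moment_exp)
         auto
    have "\<bar>integral\<^sup>L lborel ?p - integral\<^sup>L lborel ?q\<bar> \<le> (\<integral>w. \<bar>?p w - ?q w\<bar> \<partial>lborel)"
      using int_p int_q integral_abs_bound[of lborel "\<lambda>w. ?p w - ?q w"] by simp
    also have "\<dots> \<le> integral\<^sup>L lborel ?g"
    proof (rule integral_mono'[OF integrable.intros[OF g]])
      fix w :: real
      show "0 \<le> ?g w"
        using AB f1_nonneg[of w] by simp
      show "\<bar>?p w - ?q w\<bar> \<le> ?g w"
      proof (cases "w \<ge> 0")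
        case True
        have "\<bar>?p w - ?q w\<bar> = ?f1 w *
            \<bar>beta * expected_logistic_power lam beta (w / mu) 1 - exponential_density lam (w / mu)\<bar>"
          unfolding right_diff_distrib[symmetric] abs_mult using f1_nonneg[of w] True by simp
        also have "\<dots> \<le> ?f1 w * (A / beta\<^sup>2 + B * exp (- r * w))"
          using smoothing[of beta "w / mu"] beta True mu f1_nonneg[of w]
          by (intro mult_left_mono) (auto simp: r_def mult.commute)
        finally show ?thesis by (simp add: algebra_simps)
      qed (use AB in \<open>simp add: exponential_density_def\<close>)
    qed
    also have "\<dots> = A / beta\<^sup>2 + B / (1 + r)\<^sup>2"
      by (subst has_bochner_integral_integral_eq[OF g]) (simp add: power2_eq_square)
    also have "\<dots> \<le> A / beta\<^sup>2 + 4 * mu\<^sup>2 * B / beta\<^sup>2"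
    proof -
      have "1 / (1 + r)\<^sup>2 \<le> 1 / r\<^sup>2"
        using r by (intro divide_left_mono power_mono) auto
      also have "\<dots> = 4 * mu\<^sup>2 / beta\<^sup>2"
        using mu beta_pos by (simp add: r_def field_simps power2_eq_square)
      finally have "B * (1 / (1 + r)\<^sup>2) \<le> B * (4 * mu\<^sup>2 / beta\<^sup>2)"
        using AB by (intro mult_left_mono)
      then show ?thesis by (simp add: mult.commute)
    qed
    finally show ?thesis
      by (simp add: add_divide_distrib)
  qed
  then show ?thesis using that by blast
qed

lemma bias_G_le:
  assumes lam: "lam > 0" and mu: "mu > 0"
  obtains C where "\<And>beta. beta \<ge> max 1 (4 * lam) \<Longrightarrow>
    \<bar>integral\<^sup>L (sample_law lam) (G beta mu) - target lam mu\<bar> \<le> C / beta\<^sup>2"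
proof -
  let ?p = "\<lambda>beta w.
    exponential_density 1 w * w * (beta * expected_logistic_power lam beta (w / mu) 1)"
  let ?q = "\<lambda>w. exponential_density 1 w * w * exponential_density lam (w / mu)"
  obtain C where C: "\<And>beta. beta \<ge> max 1 (4 * lam) \<Longrightarrow>
      \<bar>integral\<^sup>L lborel (?p beta) - integral\<^sup>L lborel ?q\<bar> \<le> C / beta\<^sup>2"
    using smoothed_exponential_moment_error_le[OF lam mu] by blast
  have target: "target lam mu = - 2 / mu\<^sup>2 * integral\<^sup>L lborel ?q"
    using has_bochner_integral_integral_eq[OF has_bochner_integral_target[OF lam mu]] lam mu
    by (simp add: target_def field_simps)
  have "\<bar>integral\<^sup>L (sample_law lam) (G beta mu) - target lam mu\<bar> \<le> 2 / mu\<^sup>2 * C / beta\<^sup>2"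
    if beta: "beta \<ge> max 1 (4 * lam)" for beta
  proof -
    have "integral\<^sup>L (sample_law lam) (G beta mu) - target lam mu =
        - 2 / mu\<^sup>2 * (integral\<^sup>L lborel (?p beta) - integral\<^sup>L lborel ?q)"
      by (simp add: integral_G[OF lam mu] target right_diff_distrib)
    then have "\<bar>integral\<^sup>L (sample_law lam) (G beta mu) - target lam mu\<bar> =
        \<bar>- 2 / mu\<^sup>2\<bar> * \<bar>integral\<^sup>L lborel (?p beta) - integral\<^sup>L lborel ?q\<bar>"
      by (simp only: abs_mult)
    also have "\<dots> \<le> 2 / mu\<^sup>2 * (C / beta\<^sup>2)"
      unfolding abs_divide abs_minus_cancel abs_numeral abs_power2
      using C[OF beta] by (intro mult_left_mono) auto
    finally show ?thesis by simp
  qed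
  then show ?thesis using that by blast
qed

lemma expected_logistic_power_two_weighted_le:
  assumes lam: "lam > 0" and beta: "beta > 0"
  shows "exponential_density 1 w * w ^ 2 * expected_logistic_power lam beta v 2
           \<le> lam / (4 * beta) * (exponential_density 1 w * w ^ 2)"
proof -
  have "0 \<le> exponential_density 1 w * w ^ 2" by (simp add: exponential_density_def)
  from mult_left_mono[OF expected_logistic_power_two_le[OF lam beta] this] show ?thesis
    by (simp add: mult.commute)
qed

lemma integrable_weighted_expected_logistic_power_two:
  assumes lam: "lam > 0" and beta: "beta > 0"
  shows "integrable lborel
           (\<lambda>w. exponential_density 1 w * w ^ 2 * expected_logistic_power lam beta (w / mu) 2)"
proof (rule Bochner_Integration.integrable_bound)
  show "integrable lborel (\<lambda>w. lam / (4 * beta) * (exponential_density 1 w * w ^ 2))"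
    by (intro integrable_mult_right integrable.intros[OF has_bochner_integral_exponential_moment])
       simp
  show "AE w in lborel.
      norm (exponential_density 1 w * w ^ 2 * expected_logistic_power lam beta (w / mu) 2)
        \<le> norm (lam / (4 * beta) * (exponential_density 1 w * w ^ 2))"
    using lam beta expected_logistic_power_two_weighted_le[OF lam beta]
    by (intro AE_I2) (auto simp: abs_mult expected_logistic_power_nonneg exponential_density_def)
qed measurable

lemma second_moment_G_le:
  assumes lam: "lam > 0" and mu: "mu > 0" and beta: "beta > 0"
  shows "integral\<^sup>L (sample_law lam) (\<lambda>x. (G beta mu x)\<^sup>2) \<le> 2 * lam * beta / mu ^ 4"
proof -
  let ?f2 = "\<lambda>w. exponential_density 1 w * w ^ 2"
  have f2_nonneg: "0 \<le> ?f2 w" for w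
    by (simp add: exponential_density_def)
  have "(\<integral>w. ?f2 w * expected_logistic_power lam beta (w / mu) 2 \<partial>lborel) \<le>
      (\<integral>w. lam / (4 * beta) * ?f2 w \<partial>lborel)"
    using lam beta f2_nonneg expected_logistic_power_two_weighted_le[OF lam beta]
    by (intro integral_mono' integrable_mult_right
              integrable.intros[OF has_bochner_integral_exponential_moment])
       auto
  also have "\<dots> = lam / (2 * beta)"
    using has_bochner_integral_integral_eq[OF has_bochner_integral_exponential_moment[of 1 2]]
    by simp
  finally have "(- 2 * beta / mu\<^sup>2) ^ 2 *
        (\<integral>w. ?f2 w * expected_logistic_power lam beta (w / mu) 2 \<partial>lborel)
      \<le> (- 2 * beta / mu\<^sup>2) ^ 2 * (lam / (2 * beta))"
    by (intro mult_left_mono) auto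
  also have "\<dots> = 2 * lam * beta / mu ^ 4"
    using beta by (simp add: field_simps power2_eq_square eval_nat_numeral)
  finally show ?thesis
    using integral_G_power[OF lam mu, of beta 2] by simp
qed

lemma integral_weighted_expected_logistic_power_two_ge:
  assumes lam: "lam > 0" and mu: "mu > 0" and beta: "beta \<ge> 1"
  shows "lam * exp (- lam) * (exp (-1) / 4)\<^sup>2 / beta * (2 / (1 + lam / mu) ^ 3) \<le>
    (\<integral>w. exponential_density 1 w * w ^ 2 * expected_logistic_power lam beta (w / mu) 2 \<partial>lborel)"
proof -
  define a where "a = lam * exp (- lam) * (exp (-1) / 4)\<^sup>2"
  have r: "lam / mu \<ge> 0" using lam mu by simp
  let ?f2 = "\<lambda>w. exponential_density 1 w * w ^ 2"
  have "(\<integral>w. a / beta * (?f2 w * exp (- (lam / mu) * w)) \<partial>lborel) \<le>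
      (\<integral>w. ?f2 w * expected_logistic_power lam beta (w / mu) 2 \<partial>lborel)"
  proof (rule integral_mono)
    show "integrable lborel (\<lambda>w. a / beta * (?f2 w * exp (- (lam / mu) * w)))"
      by (intro integrable_mult_right
                integrable.intros[OF has_bochner_integral_exponential_moment_exp[OF r]])
    show "integrable lborel (\<lambda>w. ?f2 w * expected_logistic_power lam beta (w / mu) 2)"
      using beta by (intro integrable_weighted_expected_logistic_power_two[OF lam]) simp
    fix w :: real
    show "a / beta * (?f2 w * exp (- (lam / mu) * w)) \<le>
        ?f2 w * expected_logistic_power lam beta (w / mu) 2"
    proof (cases "w \<ge> 0")
      case True
      have "a / beta * exp (- (lam / mu) * w) =
          lam * exp (- lam * (w / mu + 1)) * (exp (-1) / 4)\<^sup>2 / beta"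
        unfolding a_def by (simp add: algebra_simps flip: exp_add)
      also have "\<dots> \<le> expected_logistic_power lam beta (w / mu) 2"
        using True mu by (intro expected_logistic_power_two_ge[OF lam beta]) simp
      finally have "?f2 w * (a / beta * exp (- (lam / mu) * w)) \<le>
          ?f2 w * expected_logistic_power lam beta (w / mu) 2"
        by (rule mult_left_mono) (simp add: exponential_density_def)
      then show ?thesis by (simp only: mult_ac)
    qed (simp add: exponential_density_def)
  qed
  also have "(\<integral>w. a / beta * (?f2 w * exp (- (lam / mu) * w)) \<partial>lborel) =
      a / beta * (2 / (1 + lam / mu) ^ 3)"
    using has_bochner_integral_integral_eq
            [OF has_bochner_integral_exponential_moment_exp[OF r, of 2]]
    by simp
  finally show ?thesis unfolding a_def .
qed

lemma second_moment_G_ge: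
  assumes lam: "lam > 0" and mu: "mu > 0"
  obtains c where "c > 0"
    "\<And>beta. beta \<ge> 1 \<Longrightarrow> c * beta \<le> integral\<^sup>L (sample_law lam) (\<lambda>x. (G beta mu x)\<^sup>2)"
proof
  define a where "a = lam * exp (- lam) * (exp (-1) / 4)\<^sup>2"
  define K where "K = 2 / (1 + lam / mu) ^ 3"
  show "0 < 4 / mu ^ 4 * a * K"
    unfolding a_def K_def using lam mu by (simp add: add_pos_pos)
  fix beta :: real
  assume beta: "beta \<ge> 1"
  have "4 / mu ^ 4 * a * K * beta = (- 2 * beta / mu\<^sup>2) ^ 2 * (a / beta * K)"
    using beta mu by (simp add: field_simps power2_eq_square eval_nat_numeral)
  also have "\<dots> \<le> (- 2 * beta / mu\<^sup>2) ^ 2 *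
      (\<integral>w. exponential_density 1 w * w ^ 2 * expected_logistic_power lam beta (w / mu) 2 \<partial>lborel)"
    using integral_weighted_expected_logistic_power_two_ge[OF lam mu beta]
    unfolding a_def K_def by (intro mult_left_mono) auto
  also have "\<dots> = integral\<^sup>L (sample_law lam) (\<lambda>x. (G beta mu x)\<^sup>2)"
    using integral_G_power[OF lam mu, of beta 2] by simp
  finally show "4 / mu ^ 4 * a * K * beta \<le> integral\<^sup>L (sample_law lam) (\<lambda>x. (G beta mu x)\<^sup>2)" .
qed

lemma MSE_eq:
  assumes lam: "lam > 0" and mu: "mu > 0" and B: "B \<ge> 1"
  shows "MSE lam mu beta B = (integral\<^sup>L (sample_law lam) (G beta mu) - target lam mu)\<^sup>2 +
    (integral\<^sup>L (sample_law lam) (\<lambda>x. (G beta mu x)\<^sup>2)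
      - (integral\<^sup>L (sample_law lam) (G beta mu))\<^sup>2) / real B"
  unfolding MSE_def
  using prob_space.bias_variance_decomposition[OF prob_space_sample_law[OF lam] _ _ B]
    integrable_G_power[OF lam mu, of beta 1] integrable_G_power[OF lam mu, of beta 2]
  by simp

lemma variance_G_le:
  assumes lam: "lam > 0" and mu: "mu > 0" and beta: "beta > 0"
  shows "integral\<^sup>L (sample_law lam) (\<lambda>x. (G beta mu x)\<^sup>2)
           - (integral\<^sup>L (sample_law lam) (G beta mu))\<^sup>2 \<le> 2 * lam / mu ^ 4 * beta"
proof -
  have "2 * lam / mu ^ 4 * beta = 2 * lam * beta / mu ^ 4" by simp
  then show ?thesis
    using second_moment_G_le[OF lam mu beta]
      zero_le_power2[of "integral\<^sup>L (sample_law lam) (G beta mu)"] by linarith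
qed

lemma variance_G_ge:
  assumes lam: "lam > 0" and mu: "mu > 0"
  obtains c D where "c > 0" "\<And>beta. beta \<ge> max 1 (4 * lam) \<Longrightarrow>
    c * beta - D \<le> integral\<^sup>L (sample_law lam) (\<lambda>x. (G beta mu x)\<^sup>2)
                   - (integral\<^sup>L (sample_law lam) (G beta mu))\<^sup>2"
proof -
  let ?mean = "\<lambda>beta. integral\<^sup>L (sample_law lam) (G beta mu)"
  obtain C where bias: "\<And>beta. beta \<ge> max 1 (4 * lam) \<Longrightarrow> \<bar>?mean beta - target lam mu\<bar> \<le> C / beta\<^sup>2"
    using bias_G_le[OF lam mu] by blast
  obtain c where c: "c > 0" and second_ge:
    "\<And>beta. beta \<ge> 1 \<Longrightarrow> c * beta \<le> integral\<^sup>L (sample_law lam) (\<lambda>x. (G beta mu x)\<^sup>2)"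
    using second_moment_G_ge[OF lam mu] by blast
  have "c * beta - (\<bar>target lam mu\<bar> + C)\<^sup>2 \<le>
      integral\<^sup>L (sample_law lam) (\<lambda>x. (G beta mu x)\<^sup>2) - (?mean beta)\<^sup>2"
    if beta: "beta \<ge> max 1 (4 * lam)" for beta
  proof -
    have beta1: "beta \<ge> 1" using beta by simp
    have "0 \<le> C / beta\<^sup>2" using bias[OF beta] by (meson abs_ge_zero order.trans)
    then have "0 \<le> C" using beta1 by (simp add: zero_le_divide_iff)
    then have "C / beta\<^sup>2 \<le> C / 1"
      using beta1 by (intro divide_left_mono) (auto simp: one_le_power)
    then have "\<bar>?mean beta\<bar> \<le> \<bar>target lam mu\<bar> + C"
      using bias[OF beta] abs_triangle_ineq2[of "?mean beta" "target lam mu"] by linarith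
    then have "(?mean beta)\<^sup>2 \<le> (\<bar>target lam mu\<bar> + C)\<^sup>2"
      by (metis abs_ge_zero power2_abs power_mono)
    then show ?thesis using second_ge[OF beta1] by linarith
  qed
  with c that show ?thesis by blast
qed

theorem corollary1:
  fixes lam mu :: real and xk :: nat and beta_star :: "nat \<Rightarrow> real"
  assumes "lam > 0" and "mu > 0" and "xk \<ge> 1"
    and "\<forall>\<^sub>F B in at_top. beta_star B > 0 \<and>
           (\<forall>beta > 0. MSE lam mu (beta_star B) B \<le> MSE lam mu beta B)"
  shows "beta_star \<in> O(\<lambda>B. real B powr (1/5)) \<and>
         (\<lambda>B. MSE lam mu (beta_star B) B) \<in> O(\<lambda>B. real B powr (-4/5))"
proof -
  \<comment> \<open>\<open>xk \<ge> 1\<close> only guarantees that the queue is busy, which is built into \<open>sample_law\<close>\<close>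
  have lam: "lam > 0" and mu: "mu > 0" using assms by auto
  obtain C where bias: "\<And>beta. beta \<ge> max 1 (4 * lam) \<Longrightarrow>
      \<bar>integral\<^sup>L (sample_law lam) (G beta mu) - target lam mu\<bar> \<le> C / beta\<^sup>2"
    using bias_G_le[OF lam mu] by blast
  obtain c D where c: "c > 0" and variance: "\<And>beta. beta \<ge> max 1 (4 * lam) \<Longrightarrow>
      c * beta - D \<le> integral\<^sup>L (sample_law lam) (\<lambda>x. (G beta mu x)\<^sup>2)
                     - (integral\<^sup>L (sample_law lam) (G beta mu))\<^sup>2"
    using variance_G_ge[OF lam mu] by blast
  have MSE_nonneg: "0 \<le> MSE lam mu beta B" for beta B
    unfolding MSE_def by (intro integral_nonneg_AE) auto
  show ?thesis
    by (rule bias_variance_tradeoff_rates[where beta_min = "max 1 (4 * lam)",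
          OF MSE_eq[OF lam mu] MSE_nonneg bias variance_G_le[OF lam mu] variance c _ assms(4)])
       auto
qed

end
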